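(* Let $H$ be a bialgebra over a commutative ring $\Bbbk$ and $A$ a right $H$-comodule algebra, with coaction $a\mapsto a^{(1)}\otimes a^{(2)}\in A\otimes H$. Then the maps $\Phi:(H^{\otimes n})^\vee\to\mathrm{Hom}_\Bbbk(A^{\otimes n},A)$ sending $f:H^{\otimes n}\to\Bbbk$ to $F(a_1\otimes\dots\otimes a_n)=a_1^{(1)}\cdots a_n^{(1)}f(a_1^{(2)}\otimes\dots\otimes a_n^{(2)})$ define a morphism of linear operads with multiplication from the operad $\mathcal{O}^H$ (whose cochain complex is $B(H)^\vee$) to the endomorphism operad $\mathcal{E}nd(A)$. In particular $\Phi$ induces a morphism of Gerstenhaber algebras $H^*(\Phi):\mathrm{Ext}^*_H(\Bbbk,\Bbbk)\to HH^*(A,A)$.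
   Context: A right $H$-comodule algebra is an algebra $A$ with a right $H$-coaction that is an algebra morphism $A\to A\otimes H$. $\mathcal{O}^H(n)=\mathrm{Hom}(H^{\otimes n},\Bbbk)$ with $(f\circ_ig)(a_1\otimes\dots\otimes a_{m+n-1})=f(a_1\otimes\dots\otimes a_{i-1}\otimes a_i^{(1)}\cdots a_{i+n-1}^{(1)}g(a_i^{(2)}\otimes\dots\otimes a_{i+n-1}^{(2)})\otimes a_{i+n}\otimes\dots\otimes a_{m+n-1})$ (coproduct $\Delta a=a^{(1)}\otimes a^{(2)}$ in $H$), identity $\varepsilon$, multiplication $\varepsilon\circ\mu_H$, $e=\mathrm{id}_\Bbbk$. $\mathcal{E}nd(A)(n)=\mathrm{Hom}(A^{\otimes n},A)$ with $\gamma(f;g_1,\dots,g_n)=f\circ(g_1\otimes\dots\otimes g_n)$, identity $\mathrm{id}_A$, multiplication the product of $A$, $e$ the unit. For an operad with multiplication, cohomology of the cochain complex ($df=\mu\circ_2f+\sum_i(-1)^if\circ_i\mu+(-1)^{n+1}\mu\circ_1f$) is a Gerstenhaber algebra with cup product $(\mu\circ_1f)\circ_{m+1}g$ and bracket $\{f,g\}=f\bar\circ g-(-1)^{(m-1)(n-1)}g\bar\circ f$, $f\bar\circ g=(-1)^{(m-1)(n-1)}\sum_i(-1)^{(n-1)(i-1)}f\circ_ig$; for $\mathcal{O}^H$ this gives $\mathrm{Ext}^*_H(\Bbbk,\Bbbk)$ and for $\mathcal{E}nd(A)$ it gives $HH^*(A,A)$. *)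

theory Defs
  imports Complex_Main
begin

section \<open>Tensor products as quotients of free modules (by multilinearity relations)\<close>

definition dlt :: "'g \<Rightarrow> 'g \<Rightarrow> 'k::comm_ring_1" where
  "dlt g = (\<lambda>x. if x = g then 1 else 0)"

definition free_vec :: "'g list \<Rightarrow> 'g \<Rightarrow> 'k::comm_ring_1" where
  "free_vec xs = (\<lambda>g. of_nat (count_list xs g))"

text \<open>Submodule of relations for \<open>H\<^sup>\<otimes>\<^sup>m\<close> (generators: lists of elements of H).\<close>
inductive tspanH :: "('k::comm_ring_1 \<Rightarrow> 'h::ab_group_add \<Rightarrow> 'h) \<Rightarrow> ('h list \<Rightarrow> 'k) \<Rightarrow> bool"
  for sH where
  zero: "tspanH sH (\<lambda>_. 0)"
| add: "tspanH sH v \<Longrightarrow> tspanH sH w \<Longrightarrow> tspanH sH (\<lambda>g. v g + w g)"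
| smult: "tspanH sH v \<Longrightarrow> tspanH sH (\<lambda>g. c * v g)"
| addH: "tspanH sH (\<lambda>g. dlt (us @ [x + y] @ vs) g - dlt (us @ [x] @ vs) g - dlt (us @ [y] @ vs) g)"
| smH: "tspanH sH (\<lambda>g. dlt (us @ [sH c x] @ vs) g - c * dlt (us @ [x] @ vs) g)"

text \<open>Submodule of relations for \<open>A \<otimes> H\<^sup>\<otimes>\<^sup>m\<close> (generators: pairs of an element of A and a list of elements of H).\<close>
inductive tspanAH :: "('k::comm_ring_1 \<Rightarrow> 'a::ab_group_add \<Rightarrow> 'a) \<Rightarrow> ('k \<Rightarrow> 'h::ab_group_add \<Rightarrow> 'h)
    \<Rightarrow> ('a \<times> 'h list \<Rightarrow> 'k) \<Rightarrow> bool"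
  for sA sH where
  zero: "tspanAH sA sH (\<lambda>_. 0)"
| add: "tspanAH sA sH v \<Longrightarrow> tspanAH sA sH w \<Longrightarrow> tspanAH sA sH (\<lambda>g. v g + w g)"
| smult: "tspanAH sA sH v \<Longrightarrow> tspanAH sA sH (\<lambda>g. c * v g)"
| addA: "tspanAH sA sH (\<lambda>g. dlt (x + y, hs) g - dlt (x, hs) g - dlt (y, hs) g)"
| smA: "tspanAH sA sH (\<lambda>g. dlt (sA c x, hs) g - c * dlt (x, hs) g)"
| addH: "tspanAH sA sH (\<lambda>g. dlt (a, us @ [x + y] @ vs) g - dlt (a, us @ [x] @ vs) g - dlt (a, us @ [y] @ vs) g)"
| smH: "tspanAH sA sH (\<lambda>g. dlt (a, us @ [sH c x] @ vs) g - c * dlt (a, us @ [x] @ vs) g)"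

text \<open>Equality in \<open>H\<^sup>\<otimes>\<^sup>m\<close> of two finite sums of pure tensors.\<close>
definition teqH :: "('k::comm_ring_1 \<Rightarrow> 'h::ab_group_add \<Rightarrow> 'h) \<Rightarrow> 'h list list \<Rightarrow> 'h list list \<Rightarrow> bool" where
  "teqH sH xs ys \<longleftrightarrow> tspanH sH (\<lambda>g. free_vec xs g - free_vec ys g)"

text \<open>Equality in \<open>A \<otimes> H\<^sup>\<otimes>\<^sup>m\<close> of two finite sums of pure tensors.\<close>
definition teqAH :: "('k::comm_ring_1 \<Rightarrow> 'a::ab_group_add \<Rightarrow> 'a) \<Rightarrow> ('k \<Rightarrow> 'h::ab_group_add \<Rightarrow> 'h)
    \<Rightarrow> ('a \<times> 'h list) list \<Rightarrow> ('a \<times> 'h list) list \<Rightarrow> bool" where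
  "teqAH sA sH xs ys \<longleftrightarrow> tspanAH sA sH (\<lambda>g. free_vec xs g - free_vec ys g)"

definition k_algebra :: "('k::comm_ring_1 \<Rightarrow> 'r::ring_1 \<Rightarrow> 'r) \<Rightarrow> bool" where
  "k_algebra s \<longleftrightarrow> module s \<and> (\<forall>c x y. s c (x * y) = s c x * y \<and> s c (x * y) = x * s c y)"

text \<open>Coproduct \<open>\<Delta> x = \<Sum> u \<otimes> v\<close> is represented by a list of pairs \<open>(u, v)\<close>.\<close>
definition bialgebra :: "('k::comm_ring_1 \<Rightarrow> 'h::ring_1 \<Rightarrow> 'h) \<Rightarrow> ('h \<Rightarrow> ('h \<times> 'h) list) \<Rightarrow> ('h \<Rightarrow> 'k) \<Rightarrow> bool" where
  "bialgebra sH \<Delta> \<epsilon> \<longleftrightarrow>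
     k_algebra sH \<and>
     (\<forall>x y. \<epsilon> (x + y) = \<epsilon> x + \<epsilon> y) \<and> (\<forall>c x. \<epsilon> (sH c x) = c * \<epsilon> x) \<and>
     (\<forall>x y. \<epsilon> (x * y) = \<epsilon> x * \<epsilon> y) \<and> \<epsilon> 1 = 1 \<and>
     (\<forall>x y. teqH sH [[u, v]. (u, v) \<leftarrow> \<Delta> (x + y)] [[u, v]. (u, v) \<leftarrow> \<Delta> x @ \<Delta> y]) \<and>
     (\<forall>c x. teqH sH [[u, v]. (u, v) \<leftarrow> \<Delta> (sH c x)] [[sH c u, v]. (u, v) \<leftarrow> \<Delta> x]) \<and>
     (\<forall>x. teqH sH [[u1, u2, v]. (u, v) \<leftarrow> \<Delta> x, (u1, u2) \<leftarrow> \<Delta> u]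
                  [[u, v1, v2]. (u, v) \<leftarrow> \<Delta> x, (v1, v2) \<leftarrow> \<Delta> v]) \<and>
     (\<forall>x. sum_list [sH (\<epsilon> u) v. (u, v) \<leftarrow> \<Delta> x] = x) \<and>
     (\<forall>x. sum_list [sH (\<epsilon> v) u. (u, v) \<leftarrow> \<Delta> x] = x) \<and>
     (\<forall>x y. teqH sH [[u, v]. (u, v) \<leftarrow> \<Delta> (x * y)] [[u * u', v * v']. (u, v) \<leftarrow> \<Delta> x, (u', v') \<leftarrow> \<Delta> y]) \<and>
     teqH sH [[u, v]. (u, v) \<leftarrow> \<Delta> 1] [[1, 1]]"

text \<open>Right coaction \<open>\<rho> a = \<Sum> a\<^sup>(\<^sup>1\<^sup>) \<otimes> a\<^sup>(\<^sup>2\<^sup>)\<close>, represented by a list of pairs.\<close>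
definition comodule_algebra :: "('k::comm_ring_1 \<Rightarrow> 'a::ring_1 \<Rightarrow> 'a) \<Rightarrow> ('k \<Rightarrow> 'h::ring_1 \<Rightarrow> 'h)
    \<Rightarrow> ('h \<Rightarrow> ('h \<times> 'h) list) \<Rightarrow> ('h \<Rightarrow> 'k) \<Rightarrow> ('a \<Rightarrow> ('a \<times> 'h) list) \<Rightarrow> bool" where
  "comodule_algebra sA sH \<Delta> \<epsilon> \<rho> \<longleftrightarrow>
     k_algebra sA \<and>
     (\<forall>x y. teqAH sA sH [(a, [h]). (a, h) \<leftarrow> \<rho> (x + y)] [(a, [h]). (a, h) \<leftarrow> \<rho> x @ \<rho> y]) \<and>
     (\<forall>c x. teqAH sA sH [(a, [h]). (a, h) \<leftarrow> \<rho> (sA c x)] [(sA c a, [h]). (a, h) \<leftarrow> \<rho> x]) \<and>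
     (\<forall>x. teqAH sA sH [(a', [h', h]). (a, h) \<leftarrow> \<rho> x, (a', h') \<leftarrow> \<rho> a]
                      [(a, [h1, h2]). (a, h) \<leftarrow> \<rho> x, (h1, h2) \<leftarrow> \<Delta> h]) \<and>
     (\<forall>x. sum_list [sA (\<epsilon> h) a. (a, h) \<leftarrow> \<rho> x] = x) \<and>
     (\<forall>x y. teqAH sA sH [(a, [h]). (a, h) \<leftarrow> \<rho> (x * y)] [(a * b, [h * k]). (a, h) \<leftarrow> \<rho> x, (b, k) \<leftarrow> \<rho> y]) \<and>
     teqAH sA sH [(a, [h]). (a, h) \<leftarrow> \<rho> 1] [(1, [1])]"

text \<open>An n-ary operation is a function on lists, only its values on lists of length n matter;
  k-linear maps out of \<open>X\<^sup>\<otimes>\<^sup>n\<close> are identified with n-multilinear maps on \<open>X\<^sup>n\<close>.\<close>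
definition multilin :: "('k \<Rightarrow> 'x \<Rightarrow> 'x) \<Rightarrow> ('k \<Rightarrow> 'v \<Rightarrow> 'v) \<Rightarrow> nat \<Rightarrow> ('x::plus list \<Rightarrow> 'v::plus) \<Rightarrow> bool" where
  "multilin sX sV n f \<longleftrightarrow>
     (\<forall>xs ys x y. length xs + length ys + 1 = n \<longrightarrow>
        f (xs @ [x + y] @ ys) = f (xs @ [x] @ ys) + f (xs @ [y] @ ys)) \<and>
     (\<forall>xs ys x c. length xs + length ys + 1 = n \<longrightarrow>
        f (xs @ [sX c x] @ ys) = sV c (f (xs @ [x] @ ys)))"

fun sweedler :: "('x \<Rightarrow> ('y \<times> 'z) list) \<Rightarrow> 'x list \<Rightarrow> ('y list \<times> 'z list) list" where
  "sweedler D [] = [([], [])]"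
| "sweedler D (x # xs) = [(y # ys, z # zs). (y, z) \<leftarrow> D x, (ys, zs) \<leftarrow> sweedler D xs]"

text \<open>Partial composition \<open>f \<circ>\<^sub>i g\<close> in \<open>\<O>\<^sup>H\<close> (g of arity n, i counted from 1).\<close>
definition compH :: "('k::comm_ring_1 \<Rightarrow> 'h::ring_1 \<Rightarrow> 'h) \<Rightarrow> ('h \<Rightarrow> ('h \<times> 'h) list)
    \<Rightarrow> ('h list \<Rightarrow> 'k) \<Rightarrow> nat \<Rightarrow> nat \<Rightarrow> ('h list \<Rightarrow> 'k) \<Rightarrow> 'h list \<Rightarrow> 'k" where
  "compH sH \<Delta> f i n g = (\<lambda>as. f (take (i - 1) as @
      [sum_list [sH (g vs) (prod_list us). (us, vs) \<leftarrow> sweedler \<Delta> (take n (drop (i - 1) as))]]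
      @ drop (i - 1 + n) as))"

text \<open>Partial composition \<open>f \<circ>\<^sub>i g\<close> in \<open>End(A)\<close> (g of arity n, i counted from 1).\<close>
definition compE :: "('a list \<Rightarrow> 'a) \<Rightarrow> nat \<Rightarrow> nat \<Rightarrow> ('a list \<Rightarrow> 'a) \<Rightarrow> 'a list \<Rightarrow> 'a" where
  "compE f i n g = (\<lambda>as. f (take (i - 1) as @ [g (take n (drop (i - 1) as))] @ drop (i - 1 + n) as))"

definition PhiMap :: "('k \<Rightarrow> 'a::{monoid_mult, monoid_add} \<Rightarrow> 'a) \<Rightarrow> ('a \<Rightarrow> ('a \<times> 'h) list) \<Rightarrow> ('h list \<Rightarrow> 'k)
    \<Rightarrow> 'a list \<Rightarrow> 'a" where
  "PhiMap sA \<rho> f = (\<lambda>as. sum_list [sA (f hs) (prod_list xs). (xs, hs) \<leftarrow> sweedler \<rho> as])"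

definition sgnv :: "int \<Rightarrow> 'v::ab_group_add \<Rightarrow> 'v" where
  "sgnv k v = (if even k then v else - v)"

type_synonym ('x, 'v) pcomp = "('x list \<Rightarrow> 'v) \<Rightarrow> nat \<Rightarrow> nat \<Rightarrow> ('x list \<Rightarrow> 'v) \<Rightarrow> 'x list \<Rightarrow> 'v"

definition cobd :: "('x, 'v::ab_group_add) pcomp \<Rightarrow> ('x list \<Rightarrow> 'v) \<Rightarrow> nat \<Rightarrow> ('x list \<Rightarrow> 'v) \<Rightarrow> 'x list \<Rightarrow> 'v" where
  "cobd cmp mu n f = (\<lambda>xs. cmp mu 2 n f xs + (\<Sum>i = 1..n. sgnv (int i) (cmp f i 2 mu xs))
                            + sgnv (int n + 1) (cmp mu 1 n f xs))"

definition cupp :: "('x, 'v) pcomp \<Rightarrow> ('x list \<Rightarrow> 'v) \<Rightarrow> ('x list \<Rightarrow> 'v) \<Rightarrow> nat \<Rightarrow> ('x list \<Rightarrow> 'v) \<Rightarrow> nat \<Rightarrow> 'x list \<Rightarrow> 'v" where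
  "cupp cmp mu f m g n = cmp (cmp mu 1 m f) (m + 1) n g"

definition circbar :: "('x, 'v::ab_group_add) pcomp \<Rightarrow> ('x list \<Rightarrow> 'v) \<Rightarrow> nat \<Rightarrow> ('x list \<Rightarrow> 'v) \<Rightarrow> nat \<Rightarrow> 'x list \<Rightarrow> 'v" where
  "circbar cmp f m g n = (\<lambda>xs. sgnv ((int m - 1) * (int n - 1))
      (\<Sum>i = 1..m. sgnv ((int n - 1) * (int i - 1)) (cmp f i n g xs)))"

definition gbracket :: "('x, 'v::ab_group_add) pcomp \<Rightarrow> ('x list \<Rightarrow> 'v) \<Rightarrow> nat \<Rightarrow> ('x list \<Rightarrow> 'v) \<Rightarrow> nat \<Rightarrow> 'x list \<Rightarrow> 'v" where
  "gbracket cmp f m g n = (\<lambda>xs. circbar cmp f m g n xs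
      - sgnv ((int m - 1) * (int n - 1)) (circbar cmp g n f m xs))"

end

theory Submission
  imports Defs
begin

text \<open>Since the coaction is linear and multiplicative, \<open>\<Phi> f\<close> is multilinear, and coacting once more on
  \<open>\<Phi> g (a\<^sub>1 \<dots> a\<^sub>n)\<close> amounts to coacting twice on every \<open>a\<^sub>j\<close>. Coassociativity
  \<open>(\<rho> \<otimes> id) \<rho> = (id \<otimes> \<Delta>) \<rho>\<close> turns these double coactions into the coproducts occurring in
  \<open>f \<circ>\<^sub>i g\<close> in \<open>\<O>\<^sup>H\<close>, whence \<open>\<Phi> (f \<circ>\<^sub>i g) = \<Phi> f \<circ>\<^sub>i \<Phi> g\<close>. The counit axiom gives
  \<open>\<Phi> \<epsilon> = id\<close> and \<open>\<Phi> (\<epsilon> \<circ> \<mu>\<^sub>H) = \<mu>\<^sub>A\<close>, and the statements about the coboundary, the cup product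
  and the bracket follow because these are built from partial compositions, the multiplication,
  signs and sums.

  All equations between tensors are only available modulo the multilinearity relations of a
  presentation of \<open>A \<otimes> H\<^sup>\<otimes>\<^sup>m\<close>, so each axiom is used through the universal property of that
  presentation.\<close>

section \<open>Maps out of a presented tensor product\<close>

definition respects_tspanAH :: "('k::comm_ring_1 \<Rightarrow> 'a::ab_group_add \<Rightarrow> 'a) \<Rightarrow> ('k \<Rightarrow> 'h::ab_group_add \<Rightarrow> 'h)
    \<Rightarrow> ('k \<Rightarrow> 'v::ab_group_add \<Rightarrow> 'v) \<Rightarrow> ('a \<times> 'h list \<Rightarrow> 'v) \<Rightarrow> bool" where
  "respects_tspanAH sA sH sV B \<longleftrightarrow>
     (\<forall>x y hs. B (x + y, hs) = B (x, hs) + B (y, hs)) \<and>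
     (\<forall>c x hs. B (sA c x, hs) = sV c (B (x, hs))) \<and>
     (\<forall>a us x y vs. B (a, us @ [x + y] @ vs) = B (a, us @ [x] @ vs) + B (a, us @ [y] @ vs)) \<and>
     (\<forall>a us c x vs. B (a, us @ [sH c x] @ vs) = sV c (B (a, us @ [x] @ vs)))"

text \<open>Summing over every large enough finite set avoids having to speak about the (finite) support
  of the coefficient vector \<open>v\<close>.\<close>
definition pairing_vanishes :: "('k::comm_ring_1 \<Rightarrow> 'v::ab_group_add \<Rightarrow> 'v) \<Rightarrow> ('g \<Rightarrow> 'v) \<Rightarrow> ('g \<Rightarrow> 'k) \<Rightarrow> bool" where
  "pairing_vanishes sV B v \<longleftrightarrow>
     (\<exists>S. finite S \<and> (\<forall>S'. finite S' \<longrightarrow> S \<subseteq> S' \<longrightarrow> (\<Sum>g\<in>S'. sV (v g) (B g)) = 0))"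

context module
begin

lemma sum_scale_dlt:
  assumes "finite S" "p \<in> S"
  shows "(\<Sum>g\<in>S. scale (dlt p g) (B g)) = B p"
proof -
  have "(\<Sum>g\<in>S. scale (dlt p g) (B g)) = (\<Sum>g\<in>S. if p = g then B g else 0)"
    by (rule sum.cong) (auto simp: dlt_def)
  then show ?thesis using assms by simp
qed

lemma sum_scale_count_list:
  assumes "finite S" "set xs \<subseteq> S"
  shows "(\<Sum>g\<in>S. scale (of_nat (count_list xs g)) (B g)) = sum_list (map B xs)"
  using assms(2)
proof (induction xs)
  case (Cons x xs)
  have "(\<Sum>g\<in>S. scale (of_nat (count_list (x # xs) g)) (B g))
      = (\<Sum>g\<in>S. scale (dlt x g) (B g) + scale (of_nat (count_list xs g)) (B g))"
    by (rule sum.cong) (auto simp: dlt_def scale_left_distrib[symmetric] add.commute)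
  then show ?case using Cons assms(1) by (simp add: sum.distrib sum_scale_dlt)
qed simp

lemma pairing_vanishes_zero: "pairing_vanishes scale B (\<lambda>_. 0)"
  unfolding pairing_vanishes_def by (intro exI[of _ "{}"]) simp

lemma pairing_vanishes_add:
  assumes "pairing_vanishes scale B v" "pairing_vanishes scale B w"
  shows "pairing_vanishes scale B (\<lambda>g. v g + w g)"
proof -
  obtain S T where "finite S" "finite T"
    and S: "\<And>S'. finite S' \<Longrightarrow> S \<subseteq> S' \<Longrightarrow> (\<Sum>g\<in>S'. scale (v g) (B g)) = 0"
    and T: "\<And>S'. finite S' \<Longrightarrow> T \<subseteq> S' \<Longrightarrow> (\<Sum>g\<in>S'. scale (w g) (B g)) = 0"
    using assms unfolding pairing_vanishes_def by blast
  show ?thesis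
    unfolding pairing_vanishes_def
    by (rule exI[of _ "S \<union> T"]) (simp add: \<open>finite S\<close> \<open>finite T\<close> S T scale_left_distrib sum.distrib)
qed

lemma pairing_vanishes_smult:
  "pairing_vanishes scale B v \<Longrightarrow> pairing_vanishes scale B (\<lambda>g. c * v g)"
  unfolding pairing_vanishes_def
  by (auto simp: scale_scale[symmetric] scale_sum_right[symmetric] simp del: scale_scale)

lemma pairing_vanishes_additive_rel:
  assumes "B p = B q + B r"
  shows "pairing_vanishes scale B (\<lambda>g. dlt p g - dlt q g - dlt r g)"
  unfolding pairing_vanishes_def
proof (intro exI[of _ "{p, q, r}"] conjI allI impI)
  fix S' assume "finite S'" "{p, q, r} \<subseteq> S'"
  then show "(\<Sum>g\<in>S'. scale (dlt p g - dlt q g - dlt r g) (B g)) = 0"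
    using assms by (simp add: scale_left_diff_distrib sum_subtractf sum_scale_dlt)
qed simp

lemma pairing_vanishes_homogeneous_rel:
  assumes "B p = scale c (B q)"
  shows "pairing_vanishes scale B (\<lambda>g. dlt p g - c * dlt q g)"
  unfolding pairing_vanishes_def
proof (intro exI[of _ "{p, q}"] conjI allI impI)
  fix S' assume "finite S'" "{p, q} \<subseteq> S'"
  then show "(\<Sum>g\<in>S'. scale (dlt p g - c * dlt q g) (B g)) = 0"
    using assms by (simp add: scale_left_diff_distrib sum_subtractf sum_scale_dlt
        scale_scale[symmetric] scale_sum_right[symmetric] del: scale_scale)
qed simp

lemma sum_list_eq_if_pairing_vanishes:
  assumes "pairing_vanishes scale B (\<lambda>g. free_vec xs g - free_vec ys g)"
  shows "sum_list (map B xs) = sum_list (map B ys)"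
proof -
  obtain S where "finite S"
    and S: "\<And>S'. finite S' \<Longrightarrow> S \<subseteq> S' \<Longrightarrow> (\<Sum>g\<in>S'. scale (free_vec xs g - free_vec ys g) (B g)) = 0"
    using assms unfolding pairing_vanishes_def by blast
  let ?S = "S \<union> set xs \<union> set ys"
  have "0 = (\<Sum>g\<in>?S. scale (free_vec xs g - free_vec ys g) (B g))"
    using S[of ?S] \<open>finite S\<close> by auto
  also have "\<dots> = (\<Sum>g\<in>?S. scale (of_nat (count_list xs g)) (B g))
                  - (\<Sum>g\<in>?S. scale (of_nat (count_list ys g)) (B g))"
    by (simp add: free_vec_def scale_left_diff_distrib sum_subtractf)
  also have "\<dots> = sum_list (map B xs) - sum_list (map B ys)"
    using \<open>finite S\<close> by (subst (1 2) sum_scale_count_list) auto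
  finally show ?thesis by simp
qed

end

lemma teqAH_sum_list_eq:
  assumes "module sV" "respects_tspanAH sA sH sV B" "teqAH sA sH xs ys"
  shows "sum_list (map B xs) = sum_list (map B ys)"
proof -
  interpret module sV by fact
  have "pairing_vanishes sV B v" if "tspanAH sA sH v" for v
    using that
  proof (induction rule: tspanAH.induct)
    case zero show ?case by (rule pairing_vanishes_zero)
  next
    case (add v w) then show ?case by (simp add: pairing_vanishes_add)
  next
    case (smult v c) then show ?case by (simp add: pairing_vanishes_smult)
  qed (use assms(2) in \<open>simp_all add: respects_tspanAH_def
        pairing_vanishes_additive_rel pairing_vanishes_homogeneous_rel\<close>)
  then show ?thesis
    using assms(3) unfolding teqAH_def by (intro sum_list_eq_if_pairing_vanishes)
qed

section \<open>Sweedler sums\<close>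

definition psum :: "('x \<times> 'y) list \<Rightarrow> ('x \<Rightarrow> 'y \<Rightarrow> 'v::comm_monoid_add) \<Rightarrow> 'v" where
  "psum L F = sum_list (map (\<lambda>(a, b). F a b) L)"

lemma psum_Nil [simp]: "psum [] F = 0"
  by (simp add: psum_def)

lemma psum_Cons [simp]: "psum ((a, b) # L) F = F a b + psum L F"
  by (simp add: psum_def)

lemma psum_append [simp]: "psum (L @ M) F = psum L F + psum M F"
  by (simp add: psum_def)

lemma psum_cong: "(\<And>a b. (a, b) \<in> set L \<Longrightarrow> F a b = G a b) \<Longrightarrow> psum L F = psum L G"
  by (induction L) auto

lemma psum_strong_cong:
  "L = M \<Longrightarrow> (\<And>a b. (a, b) \<in> set M =simp=> F a b = G a b) \<Longrightarrow> psum L F = psum M G"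
  unfolding simp_implies_def by (blast intro: psum_cong)

lemma psum_zero [simp]: "psum L (\<lambda>a b. 0) = 0"
  by (induction L) auto

lemma psum_add: "psum L (\<lambda>a b. F a b + G a b) = psum L F + psum L G"
  by (induction L) (auto simp: algebra_simps)

lemma psum_neg: "psum L (\<lambda>a b. - F a b) = - psum L (F :: _ \<Rightarrow> _ \<Rightarrow> 'v::ab_group_add)"
  by (induction L) auto

lemma psum_sum: "psum L (\<lambda>a b. \<Sum>i\<in>I. F i a b) = (\<Sum>i\<in>I. psum L (F i))"
  by (induction L) (auto simp: sum.distrib)

lemma psum_swap: "psum L (\<lambda>a b. psum M (\<lambda>c d. F a b c d)) = psum M (\<lambda>c d. psum L (\<lambda>a b. F a b c d))"
  by (induction L) (auto simp: psum_add)

lemma psum_map: "psum (map (\<lambda>(a, b). (f a b, g a b)) L) F = psum L (\<lambda>a b. F (f a b) (g a b))"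
  by (induction L) auto

lemma psum_bind: "psum (concat (map (\<lambda>(a, b). G a b) L)) F = psum L (\<lambda>a b. psum (G a b) F)"
  by (induction L) auto

lemma (in module) psum_scale_right: "scale c (psum L F) = psum L (\<lambda>a b. scale c (F a b))"
  by (induction L) (auto simp: scale_right_distrib)

lemma (in module) psum_scale_left: "scale (psum L F) x = psum L (\<lambda>a b. scale (F a b) x)"
  by (induction L) (auto simp: scale_left_distrib)

lemma length_sweedler: "(ys, zs) \<in> set (sweedler D xs) \<Longrightarrow> length ys = length xs \<and> length zs = length xs"
  by (induction xs arbitrary: ys zs) auto

lemma psum_sweedler_Nil [simp]: "psum (sweedler D []) F = F [] []"
  by (simp add: psum_def)

lemma psum_sweedler_Cons:
  "psum (sweedler D (x # xs)) F = psum (D x) (\<lambda>y z. psum (sweedler D xs) (\<lambda>ys zs. F (y # ys) (z # zs)))"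
  by (simp add: psum_bind psum_map)

lemma psum_sweedler_single: "psum (sweedler D [x]) F = psum (D x) (\<lambda>y z. F [y] [z])"
  by (simp add: psum_sweedler_Cons del: sweedler.simps)

lemma psum_sweedler_append:
  "psum (sweedler D (xs @ ys)) F
     = psum (sweedler D xs) (\<lambda>as bs. psum (sweedler D ys) (\<lambda>cs ds. F (as @ cs) (bs @ ds)))"
  by (induction xs arbitrary: F) (simp_all add: psum_sweedler_Cons del: sweedler.simps)

definition slot_linear :: "('k \<Rightarrow> 'x \<Rightarrow> 'x) \<Rightarrow> ('k \<Rightarrow> 'v \<Rightarrow> 'v) \<Rightarrow> nat \<Rightarrow> nat \<Rightarrow> ('x::plus list \<Rightarrow> 'v::plus) \<Rightarrow> bool" where
  "slot_linear sX sV m i f \<longleftrightarrow>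
     (\<forall>us vs x y. length us = i - 1 \<and> length vs = m - i \<longrightarrow>
        f (us @ [x + y] @ vs) = f (us @ [x] @ vs) + f (us @ [y] @ vs)) \<and>
     (\<forall>us vs c x. length us = i - 1 \<and> length vs = m - i \<longrightarrow>
        f (us @ [sX c x] @ vs) = sV c (f (us @ [x] @ vs)))"

lemma multilin_iff_slot_linear:
  fixes f :: "'x::plus list \<Rightarrow> 'v::plus"
  shows "multilin sX sV m f \<longleftrightarrow> (\<forall>i. 1 \<le> i \<and> i \<le> m \<longrightarrow> slot_linear sX sV m i f)"
proof
  assume "multilin sX sV m f"
  then show "\<forall>i. 1 \<le> i \<and> i \<le> m \<longrightarrow> slot_linear sX sV m i f"
    unfolding multilin_def slot_linear_def by auto
next
  assume slots: "\<forall>i. 1 \<le> i \<and> i \<le> m \<longrightarrow> slot_linear sX sV m i f"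
  show "multilin sX sV m f"
    unfolding multilin_def
  proof (intro conjI allI impI)
    fix xs ys :: "'x list" and x y assume "length xs + length ys + 1 = m"
    with slots[rule_format, of "length xs + 1"]
    show "f (xs @ [x + y] @ ys) = f (xs @ [x] @ ys) + f (xs @ [y] @ ys)"
      unfolding slot_linear_def by auto
  next
    fix xs ys :: "'x list" and c x assume "length xs + length ys + 1 = m"
    with slots[rule_format, of "length xs + 1"]
    show "f (xs @ [sX c x] @ ys) = sV c (f (xs @ [x] @ ys))"
      unfolding slot_linear_def by auto
  qed
qed

lemma multilin_Cons:
  fixes f :: "'x::plus list \<Rightarrow> 'v::plus"
  assumes "multilin sX sV (Suc n) f"
  shows "multilin sX sV n (\<lambda>vs. f (v # vs))"
  unfolding multilin_def
proof (intro conjI allI impI)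
  fix xs ys :: "'x list" and x y assume "length xs + length ys + 1 = n"
  then show "f (v # xs @ [x + y] @ ys) = f (v # xs @ [x] @ ys) + f (v # xs @ [y] @ ys)"
    using assms[unfolded multilin_def, THEN conjunct1, rule_format, of "v # xs" ys x y] by simp
next
  fix xs ys :: "'x list" and c x assume "length xs + length ys + 1 = n"
  then show "f (v # xs @ [sX c x] @ ys) = sV c (f (v # xs @ [x] @ ys))"
    using assms[unfolded multilin_def, THEN conjunct2, rule_format, of "v # xs" ys c x] by simp
qed

section \<open>Consequences of the comodule algebra axioms\<close>

locale comodule_algebra_over_bialgebra =
  fixes sH :: "'k::comm_ring_1 \<Rightarrow> 'h::ring_1 \<Rightarrow> 'h"
    and sA :: "'k \<Rightarrow> 'a::ring_1 \<Rightarrow> 'a"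
    and \<Delta> :: "'h \<Rightarrow> ('h \<times> 'h) list"
    and \<epsilon> :: "'h \<Rightarrow> 'k"
    and \<rho> :: "'a \<Rightarrow> ('a \<times> 'h) list"
  assumes bialgebra: "bialgebra sH \<Delta> \<epsilon>"
    and comodule_algebra: "comodule_algebra sA sH \<Delta> \<epsilon> \<rho>"
begin

sublocale A: module sA
  using comodule_algebra by (simp add: comodule_algebra_def k_algebra_def)

sublocale H: module sH
  using bialgebra by (simp add: bialgebra_def k_algebra_def)

lemma scaleA_mult_left: "sA c x * y = sA c (x * y)"
  and scaleA_mult_right: "x * sA c y = sA c (x * y)"
  using comodule_algebra unfolding comodule_algebra_def k_algebra_def by (metis, metis)

lemma scaleH_mult_left: "sH c x * y = sH c (x * y)"
  and scaleH_mult_right: "x * sH c y = sH c (x * y)"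
  using bialgebra unfolding bialgebra_def k_algebra_def by (metis, metis)

lemma counit_add: "\<epsilon> (x + y) = \<epsilon> x + \<epsilon> y"
  and counit_scale: "\<epsilon> (sH c x) = c * \<epsilon> x"
  using bialgebra by (simp_all add: bialgebra_def)

definition bilinear_AH :: "('a \<Rightarrow> 'h \<Rightarrow> 'a) \<Rightarrow> bool" where
  "bilinear_AH B \<longleftrightarrow>
     (\<forall>a a' h. B (a + a') h = B a h + B a' h) \<and> (\<forall>c a h. B (sA c a) h = sA c (B a h)) \<and>
     (\<forall>a h h'. B a (h + h') = B a h + B a h') \<and> (\<forall>a c h. B a (sH c h) = sA c (B a h))"

definition trilinear_AHH :: "('a \<Rightarrow> 'h \<Rightarrow> 'h \<Rightarrow> 'a) \<Rightarrow> bool" where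
  "trilinear_AHH T \<longleftrightarrow>
     (\<forall>a a' h k. T (a + a') h k = T a h k + T a' h k) \<and> (\<forall>c a h k. T (sA c a) h k = sA c (T a h k)) \<and>
     (\<forall>a h h' k. T a (h + h') k = T a h k + T a h' k) \<and> (\<forall>a c h k. T a (sH c h) k = sA c (T a h k)) \<and>
     (\<forall>a h k k'. T a h (k + k') = T a h k + T a h k') \<and> (\<forall>a c h k. T a h (sH c k) = sA c (T a h k))"

lemma bilinear_AH_mult:
  "bilinear_AH B \<Longrightarrow> bilinear_AH (\<lambda>b k. B (a * b) (h * k))"
  unfolding bilinear_AH_def by (simp add: distrib_left scaleA_mult_right scaleH_mult_right)

lemma trilinear_AHH_psum:
  assumes "\<And>x y. (x, y) \<in> set L \<Longrightarrow> trilinear_AHH (T x y)"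
  shows "trilinear_AHH (\<lambda>a h k. psum L (\<lambda>x y. T x y a h k))"
  using assms unfolding trilinear_AHH_def
  by (simp add: A.psum_scale_right psum_add[symmetric] cong: psum_strong_cong)

text \<open>The relations of \<open>A \<otimes> H\<^sup>\<otimes>\<^sup>m\<close> preserve \<open>m\<close>, so \<open>B\<close> may be extended by zero to tensors with
  \<open>m \<noteq> 1\<close>.\<close>
lemma psum_eq_if_teqAH:
  assumes "teqAH sA sH [(a, [h]). (a, h) \<leftarrow> L] [(a, [h]). (a, h) \<leftarrow> M]" "bilinear_AH B"
  shows "psum L B = psum M B"
proof -
  let ?B = "\<lambda>(a, hs). if length hs = 1 then B a (hd hs) else 0"
  have "length (us @ [x] @ vs) = 1 \<longleftrightarrow> us = [] \<and> vs = []" for us vs and x :: 'h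
    by auto
  then have "respects_tspanAH sA sH sA ?B"
    using assms(2) unfolding respects_tspanAH_def bilinear_AH_def by auto
  from teqAH_sum_list_eq[OF A.module_axioms this assms(1)] show ?thesis
    by (simp add: psum_def comp_def split_def)
qed

lemma psum_rho_add:
  assumes "bilinear_AH B"
  shows "psum (\<rho> (x + y)) B = psum (\<rho> x) B + psum (\<rho> y) B"
proof -
  have "teqAH sA sH [(a, [h]). (a, h) \<leftarrow> \<rho> (x + y)] [(a, [h]). (a, h) \<leftarrow> \<rho> x @ \<rho> y]"
    using comodule_algebra by (simp add: comodule_algebra_def)
  from psum_eq_if_teqAH[OF this assms] show ?thesis by simp
qed

lemma psum_rho_scale:
  assumes "bilinear_AH B"
  shows "psum (\<rho> (sA c x)) B = sA c (psum (\<rho> x) B)"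
proof -
  have "teqAH sA sH [(a, [h]). (a, h) \<leftarrow> \<rho> (sA c x)]
      [(a, [h]). (a, h) \<leftarrow> map (\<lambda>(a, h). (sA c a, h)) (\<rho> x)]"
    using comodule_algebra by (simp add: comodule_algebra_def comp_def split_def)
  from psum_eq_if_teqAH[OF this assms] show ?thesis
    using assms by (simp add: bilinear_AH_def psum_map A.psum_scale_right)
qed

lemma psum_rho_zero: "bilinear_AH B \<Longrightarrow> psum (\<rho> 0) B = 0"
  using psum_rho_scale[of B 0 0] by simp

lemma psum_rho_psum:
  "bilinear_AH B \<Longrightarrow> psum (\<rho> (psum L F)) B = psum L (\<lambda>a b. psum (\<rho> (F a b)) B)"
  by (induction L) (auto simp: psum_rho_zero psum_rho_add)

lemma psum_rho_mult:
  assumes "bilinear_AH B"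
  shows "psum (\<rho> (x * y)) B = psum (\<rho> x) (\<lambda>a h. psum (\<rho> y) (\<lambda>b k. B (a * b) (h * k)))"
proof -
  have "teqAH sA sH [(a, [h]). (a, h) \<leftarrow> \<rho> (x * y)]
      [(a, [h]). (a, h) \<leftarrow> concat (map (\<lambda>(a, h). map (\<lambda>(b, k). (a * b, h * k)) (\<rho> y)) (\<rho> x))]"
    using comodule_algebra by (simp add: comodule_algebra_def map_concat comp_def split_def)
  from psum_eq_if_teqAH[OF this assms] show ?thesis
    by (simp add: psum_bind psum_map)
qed

lemma psum_rho_one:
  assumes "bilinear_AH B"
  shows "psum (\<rho> 1) B = B 1 1"
proof -
  have "teqAH sA sH [(a, [h]). (a, h) \<leftarrow> \<rho> 1] [(a, [h]). (a, h) \<leftarrow> [(1, 1)]]"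
    using comodule_algebra by (simp add: comodule_algebra_def)
  from psum_eq_if_teqAH[OF this assms] show ?thesis by simp
qed

lemma psum_rho_prod_list:
  "bilinear_AH B \<Longrightarrow>
     psum (\<rho> (prod_list xs)) B = psum (sweedler \<rho> xs) (\<lambda>ys ks. B (prod_list ys) (prod_list ks))"
proof (induction xs arbitrary: B)
  case (Cons x xs)
  then show ?case
    by (simp add: psum_rho_mult bilinear_AH_mult psum_sweedler_Cons mult.assoc del: sweedler.simps)
qed (simp add: psum_rho_one)

lemma psum_rho_counit: "psum (\<rho> x) (\<lambda>a h. sA (\<epsilon> h) a) = x"
  using comodule_algebra by (simp add: comodule_algebra_def psum_def)

lemma psum_rho_coassoc:
  assumes "trilinear_AHH T"
  shows "psum (\<rho> x) (\<lambda>a h. psum (\<rho> a) (\<lambda>a' h'. T a' h' h))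
       = psum (\<rho> x) (\<lambda>a h. psum (\<Delta> h) (\<lambda>h1 h2. T a h1 h2))"
proof -
  let ?T = "\<lambda>(a, hs). if length hs = 2 then T a (hs ! 0) (hs ! 1) else 0"
  have "length (us @ [x] @ vs) = 2 \<longleftrightarrow> (us = [] \<and> length vs = 1) \<or> (length us = 1 \<and> vs = [])"
    for us vs and x :: 'h
    by (cases us) auto
  then have "respects_tspanAH sA sH sA ?T"
    using assms unfolding respects_tspanAH_def trilinear_AHH_def
    by (auto simp: nth_append length_Suc_conv)
  moreover have "teqAH sA sH [(a', [h', h]). (a, h) \<leftarrow> \<rho> x, (a', h') \<leftarrow> \<rho> a]
                            [(a, [h1, h2]). (a, h) \<leftarrow> \<rho> x, (h1, h2) \<leftarrow> \<Delta> h]"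
    using comodule_algebra by (simp add: comodule_algebra_def)
  ultimately have "sum_list (map ?T [(a', [h', h]). (a, h) \<leftarrow> \<rho> x, (a', h') \<leftarrow> \<rho> a])
                 = sum_list (map ?T [(a, [h1, h2]). (a, h) \<leftarrow> \<rho> x, (h1, h2) \<leftarrow> \<Delta> h])"
    by (rule teqAH_sum_list_eq[OF A.module_axioms])
  then show ?thesis
    by (simp add: psum_def[symmetric] psum_bind psum_map)
qed

lemma slot_linear_psum:
  assumes "slot_linear sH (*) m i f" "length us = i - 1" "length vs = m - i"
  shows "f (us @ [psum L (\<lambda>a b. sH (c a b) (e a b))] @ vs) = psum L (\<lambda>a b. c a b * f (us @ [e a b] @ vs))"
proof (induction L)
  case Nil
  have "f (us @ [sH 0 0] @ vs) = 0 * f (us @ [0] @ vs)"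
    using assms unfolding slot_linear_def by blast
  then show ?case by simp
next
  case (Cons p L)
  then show ?case using assms unfolding slot_linear_def by (cases p) simp
qed

lemma trilinear_AHH_scale_bilinear:
  assumes B: "bilinear_AH B" and g: "multilin sH (*) (Suc (length hm)) g"
  shows "trilinear_AHH (\<lambda>a u v. sA (g (v # hm)) (B (a * Y) (u * K)))"
proof -
  have "g ((v + v') # hm) = g (v # hm) + g (v' # hm)" for v v'
    using g[unfolded multilin_def, THEN conjunct1, rule_format, of "[]" hm v v'] by simp
  moreover have "g (sH c v # hm) = c * g (v # hm)" for c v
    using g[unfolded multilin_def, THEN conjunct2, rule_format, of "[]" hm c v] by simp
  ultimately show ?thesis
    using B unfolding trilinear_AHH_def bilinear_AH_def
    by (simp add: distrib_right scaleA_mult_left scaleH_mult_left A.scale_right_distrib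
        A.scale_left_distrib mult.commute)
qed

text \<open>Coassociativity, iterated along the factors of \<open>prod_list xm\<close>: the heart of
  \<open>\<Phi> (f \<circ>\<^sub>i g) = \<Phi> f \<circ>\<^sub>i \<Phi> g\<close>.\<close>
lemma psum_sweedler_coassoc:
  assumes "bilinear_AH B" "multilin sH (*) (length M) g"
  shows "psum (sweedler \<rho> M) (\<lambda>xm hm. psum (sweedler \<Delta> hm) (\<lambda>us vs. sA (g vs) (B (prod_list xm) (prod_list us))))
       = psum (sweedler \<rho> M) (\<lambda>xm hm. psum (sweedler \<rho> xm) (\<lambda>ys ks. sA (g hm) (B (prod_list ys) (prod_list ks))))"
  using assms
proof (induction M arbitrary: B g)
  case (Cons x M)
  define T where "T a u v = psum (sweedler \<rho> M) (\<lambda>xm hm. psum (sweedler \<rho> xm)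
      (\<lambda>ys ks. sA (g (v # hm)) (B (a * prod_list ys) (u * prod_list ks))))" for a u v
  have "trilinear_AHH T"
    unfolding T_def using Cons.prems
    by (intro trilinear_AHH_psum trilinear_AHH_scale_bilinear) (auto dest: length_sweedler)
  have "psum (sweedler \<rho> (x # M)) (\<lambda>xm hm. psum (sweedler \<Delta> hm) (\<lambda>us vs. sA (g vs) (B (prod_list xm) (prod_list us))))
      = psum (\<rho> x) (\<lambda>a h. psum (\<Delta> h) (\<lambda>u v. psum (sweedler \<rho> M) (\<lambda>xm hm. psum (sweedler \<Delta> hm)
          (\<lambda>us vs. sA (g (v # vs)) (B (a * prod_list xm) (u * prod_list us))))))"
    by (simp add: psum_sweedler_Cons psum_swap[of "\<Delta> _"] del: sweedler.simps)
  also have "\<dots> = psum (\<rho> x) (\<lambda>a h. psum (\<Delta> h) (\<lambda>u v. T a u v))"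
    unfolding T_def
    apply (rule psum_cong, rule psum_cong)
    subgoal for a h u v
      using Cons.IH[OF bilinear_AH_mult[OF Cons.prems(1), of a u]
          multilin_Cons[OF Cons.prems(2)[unfolded length_Cons], of v]]
      by (simp add: mult.assoc)
    done
  also have "\<dots> = psum (\<rho> x) (\<lambda>a h. psum (\<rho> a) (\<lambda>a' h'. T a' h' h))"
    by (rule psum_rho_coassoc[OF \<open>trilinear_AHH T\<close>, symmetric])
  also have "\<dots> = psum (sweedler \<rho> (x # M)) (\<lambda>xm hm. psum (sweedler \<rho> xm) (\<lambda>ys ks. sA (g hm) (B (prod_list ys) (prod_list ks))))"
    unfolding T_def by (simp add: psum_sweedler_Cons psum_swap[of "\<rho> _"] del: sweedler.simps)
  finally show ?case .
qed simp

lemma Phi_psum: "PhiMap sA \<rho> f as = psum (sweedler \<rho> as) (\<lambda>xs hs. sA (f hs) (prod_list xs))"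
  by (simp add: PhiMap_def psum_def)

lemma Phi_add: "PhiMap sA \<rho> (\<lambda>hs. f hs + g hs) as = PhiMap sA \<rho> f as + PhiMap sA \<rho> g as"
  by (simp add: Phi_psum A.scale_left_distrib psum_add)

lemma Phi_neg: "PhiMap sA \<rho> (\<lambda>hs. - f hs) as = - PhiMap sA \<rho> f as"
  by (simp add: Phi_psum psum_neg)

lemma Phi_diff: "PhiMap sA \<rho> (\<lambda>hs. f hs - g hs) as = PhiMap sA \<rho> f as - PhiMap sA \<rho> g as"
  using Phi_add[of f "\<lambda>hs. - g hs"] by (simp add: Phi_neg)

lemma Phi_sgnv: "PhiMap sA \<rho> (\<lambda>hs. sgnv k (f hs)) as = sgnv k (PhiMap sA \<rho> f as)"
  by (simp add: sgnv_def Phi_neg)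

lemma Phi_sum: "PhiMap sA \<rho> (\<lambda>hs. \<Sum>i\<in>I. f i hs) as = (\<Sum>i\<in>I. PhiMap sA \<rho> (f i) as)"
  by (simp add: Phi_psum A.scale_sum_left psum_sum)

lemma Phi_linear: "PhiMap sA \<rho> (\<lambda>hs. c * f hs + g hs) as = sA c (PhiMap sA \<rho> f as) + PhiMap sA \<rho> g as"
  by (simp add: Phi_psum A.scale_left_distrib psum_add A.psum_scale_right)

text \<open>The contribution of the coaction on the argument in slot \<open>i\<close> to \<open>\<Phi> f\<close>, as a bilinear form
  in its two components (see \<open>Phi_slot\<close>).\<close>
definition slot_pairing :: "('h list \<Rightarrow> 'k) \<Rightarrow> 'h list \<Rightarrow> 'h list \<Rightarrow> 'a list \<Rightarrow> 'a list \<Rightarrow> 'a \<Rightarrow> 'h \<Rightarrow> 'a" where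
  "slot_pairing f hp hs xp xs y k = sA (f (hp @ [k] @ hs)) (prod_list xp * (y * prod_list xs))"

lemma bilinear_AH_slot_pairing:
  assumes "slot_linear sH (*) m i f" "length hp = i - 1" "length hs = m - i"
  shows "bilinear_AH (slot_pairing f hp hs xp xs)"
  using assms unfolding bilinear_AH_def slot_pairing_def slot_linear_def
  by (simp add: distrib_left distrib_right A.scale_left_distrib A.scale_right_distrib
      scaleA_mult_left scaleA_mult_right mult.commute)

lemma Phi_slot:
  "PhiMap sA \<rho> f (P @ [z] @ S)
     = psum (sweedler \<rho> P) (\<lambda>xp hp. psum (sweedler \<rho> S) (\<lambda>xs hs. psum (\<rho> z) (slot_pairing f hp hs xp xs)))"
  unfolding Phi_psum slot_pairing_def psum_sweedler_append psum_sweedler_single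
  by (simp add: psum_swap[of "\<rho> z"] mult.assoc del: sweedler.simps)

lemma Phi_slot_linear:
  assumes f: "slot_linear sH (*) m i f"
  shows "slot_linear sA sA m i (PhiMap sA \<rho> f)"
  unfolding slot_linear_def
proof (intro conjI allI impI; elim conjE)
  fix P S :: "'a list" assume "length P = i - 1" "length S = m - i"
  then have pairing: "bilinear_AH (slot_pairing f hp hs xp xs)"
    if "(xp, hp) \<in> set (sweedler \<rho> P)" "(xs, hs) \<in> set (sweedler \<rho> S)" for xp hp xs hs
    using that by (intro bilinear_AH_slot_pairing[OF f]) (auto dest: length_sweedler)
  show "PhiMap sA \<rho> f (P @ [x + y] @ S) = PhiMap sA \<rho> f (P @ [x] @ S) + PhiMap sA \<rho> f (P @ [y] @ S)" for x y
    unfolding Phi_slot by (simp add: pairing psum_rho_add psum_add cong: psum_strong_cong)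
  show "PhiMap sA \<rho> f (P @ [sA c x] @ S) = sA c (PhiMap sA \<rho> f (P @ [x] @ S))" for c x
    unfolding Phi_slot by (simp add: pairing psum_rho_scale A.psum_scale_right cong: psum_strong_cong)
qed

lemma Phi_multilin: "multilin sH (*) n f \<Longrightarrow> multilin sA sA n (PhiMap sA \<rho> f)"
  by (simp add: multilin_iff_slot_linear Phi_slot_linear)

lemma psum_rho_Phi:
  assumes "bilinear_AH B"
  shows "psum (\<rho> (PhiMap sA \<rho> g M)) B
       = psum (sweedler \<rho> M) (\<lambda>xm hm. psum (sweedler \<rho> xm) (\<lambda>ys ks. sA (g hm) (B (prod_list ys) (prod_list ks))))"
  unfolding Phi_psum
  by (simp add: assms psum_rho_psum psum_rho_scale psum_rho_prod_list A.psum_scale_right)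

lemma compH_append:
  assumes "slot_linear sH (*) m i f" "length hp = i - 1" "length hm = n" "length hs = m - i"
  shows "compH sH \<Delta> f i n g (hp @ hm @ hs)
       = psum (sweedler \<Delta> hm) (\<lambda>us vs. g vs * f (hp @ [prod_list us] @ hs))"
  using assms slot_linear_psum[OF assms(1,2,4), of "sweedler \<Delta> hm" "\<lambda>us vs. g vs" "\<lambda>us vs. prod_list us"]
  by (simp add: compH_def psum_def[symmetric])

lemma Phi_compH_append:
  assumes f: "slot_linear sH (*) m i f" and "length P = i - 1" "length M = n" "length S = m - i"
  shows "PhiMap sA \<rho> (compH sH \<Delta> f i n g) (P @ M @ S)
       = psum (sweedler \<rho> P) (\<lambda>xp hp. psum (sweedler \<rho> S) (\<lambda>xs hs. psum (sweedler \<rho> M) (\<lambda>xm hm.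
           psum (sweedler \<Delta> hm) (\<lambda>us vs. sA (g vs) (slot_pairing f hp hs xp xs (prod_list xm) (prod_list us))))))"
proof -
  have "PhiMap sA \<rho> (compH sH \<Delta> f i n g) (P @ M @ S)
      = psum (sweedler \<rho> P) (\<lambda>xp hp. psum (sweedler \<rho> M) (\<lambda>xm hm. psum (sweedler \<rho> S) (\<lambda>xs hs.
          sA (compH sH \<Delta> f i n g (hp @ hm @ hs)) (prod_list xp * (prod_list xm * prod_list xs)))))"
    unfolding Phi_psum psum_sweedler_append by simp
  also have "\<dots> = psum (sweedler \<rho> P) (\<lambda>xp hp. psum (sweedler \<rho> M) (\<lambda>xm hm. psum (sweedler \<rho> S) (\<lambda>xs hs.
      psum (sweedler \<Delta> hm) (\<lambda>us vs. sA (g vs) (slot_pairing f hp hs xp xs (prod_list xm) (prod_list us))))))"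
    apply (rule psum_cong, rule psum_cong, rule psum_cong)
    subgoal for xp hp xm hm xs hs
      using assms by (auto dest!: length_sweedler simp: compH_append A.psum_scale_left slot_pairing_def)
    done
  finally show ?thesis
    by (simp only: psum_swap[of "sweedler \<rho> M" "sweedler \<rho> S"])
qed

lemma Phi_compH:
  assumes f: "slot_linear sH (*) m i f" and g: "multilin sH (*) n g"
    and i: "1 \<le> i" "i \<le> m" and len: "length as = m + n - 1"
  shows "PhiMap sA \<rho> (compH sH \<Delta> f i n g) as = compE (PhiMap sA \<rho> f) i n (PhiMap sA \<rho> g) as"
proof -
  define P M S where "P = take (i - 1) as" and "M = take n (drop (i - 1) as)" and "S = drop (i - 1 + n) as"
  have as: "as = P @ M @ S"
    unfolding P_def M_def S_def by (metis append_take_drop_id drop_drop add.commute)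
  have lengths: "length P = i - 1" "length M = n" "length S = m - i"
    unfolding P_def M_def S_def using len i by auto
  have pairing: "bilinear_AH (slot_pairing f hp hs xp xs)"
    if "(xp, hp) \<in> set (sweedler \<rho> P)" "(xs, hs) \<in> set (sweedler \<rho> S)" for xp hp xs hs
    using that lengths by (intro bilinear_AH_slot_pairing[OF f]) (auto dest: length_sweedler)
  have "PhiMap sA \<rho> (compH sH \<Delta> f i n g) as
      = psum (sweedler \<rho> P) (\<lambda>xp hp. psum (sweedler \<rho> S) (\<lambda>xs hs. psum (sweedler \<rho> M) (\<lambda>xm hm.
          psum (sweedler \<Delta> hm) (\<lambda>us vs. sA (g vs) (slot_pairing f hp hs xp xs (prod_list xm) (prod_list us))))))"
    unfolding as using Phi_compH_append[OF f lengths(1,2,3)] .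
  also have "\<dots> = psum (sweedler \<rho> P) (\<lambda>xp hp. psum (sweedler \<rho> S) (\<lambda>xs hs.
      psum (\<rho> (PhiMap sA \<rho> g M)) (slot_pairing f hp hs xp xs)))"
    using g lengths(2)
    by (simp add: pairing psum_sweedler_coassoc psum_rho_Phi cong: psum_strong_cong)
  also have "\<dots> = compE (PhiMap sA \<rho> f) i n (PhiMap sA \<rho> g) as"
    unfolding compE_def Phi_slot P_def M_def S_def ..
  finally show ?thesis .
qed

abbreviation mult_H :: "'h list \<Rightarrow> 'k" where "mult_H \<equiv> \<lambda>hs. \<epsilon> (hs ! 0 * hs ! 1)"
abbreviation mult_A :: "'a list \<Rightarrow> 'a" where "mult_A \<equiv> \<lambda>as. as ! 0 * as ! 1"

lemma Phi_multilin_compH: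
  assumes "multilin sH (*) m f" "multilin sH (*) n g" "1 \<le> i" "i \<le> m" "length as = m + n - 1"
  shows "PhiMap sA \<rho> (compH sH \<Delta> f i n g) as = compE (PhiMap sA \<rho> f) i n (PhiMap sA \<rho> g) as"
  using assms by (intro Phi_compH) (auto simp: multilin_iff_slot_linear)

lemma Phi_counit: "PhiMap sA \<rho> (\<lambda>hs. \<epsilon> (hs ! 0)) [a] = a"
  by (simp add: Phi_psum psum_sweedler_single psum_rho_counit del: sweedler.simps)

lemma Phi_unit: "PhiMap sA \<rho> (\<lambda>_. 1) [] = 1"
  by (simp add: Phi_psum)

lemma Phi_mult: "PhiMap sA \<rho> mult_H [a, b] = a * b"
proof -
  have "bilinear_AH (\<lambda>y k. sA (\<epsilon> k) y)"
    unfolding bilinear_AH_def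
    by (simp add: counit_add counit_scale A.scale_left_distrib A.scale_right_distrib mult.commute)
  then have "psum (\<rho> (a * b)) (\<lambda>y k. sA (\<epsilon> k) y)
      = psum (\<rho> a) (\<lambda>a' h. psum (\<rho> b) (\<lambda>b' k. sA (\<epsilon> (h * k)) (a' * b')))"
    by (rule psum_rho_mult)
  then show ?thesis
    by (simp add: Phi_psum psum_sweedler_Cons psum_rho_counit del: sweedler.simps)
qed

lemma Phi_mult_length_2:
  assumes "length as = 2"
  shows "PhiMap sA \<rho> mult_H as = mult_A as"
proof -
  obtain a b where "as = [a, b]"
    using assms by (auto simp: numeral_2_eq_2 length_Suc_conv)
  then show ?thesis using Phi_mult by simp
qed

lemma multilin_mult_H: "multilin sH (*) 2 mult_H"
  unfolding multilin_def
  by (auto simp: add_is_1 length_Suc_conv distrib_left distrib_right counit_add counit_scale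
      scaleH_mult_left scaleH_mult_right)

lemma slot_linear_compH_mult_H: "slot_linear sH (*) (m + 1) (m + 1) (compH sH \<Delta> mult_H 1 m f)"
  unfolding slot_linear_def compH_def
  by (auto simp: distrib_left counit_add scaleH_mult_right counit_scale)

lemma Phi_cobd:
  assumes f: "multilin sH (*) n f" and len: "length as = n + 1"
  shows "PhiMap sA \<rho> (cobd (compH sH \<Delta>) mult_H n f) as = cobd compE mult_A n (PhiMap sA \<rho> f) as"
proof -
  have outer: "PhiMap sA \<rho> (compH sH \<Delta> mult_H i n f) as = compE mult_A i n (PhiMap sA \<rho> f) as"
    if "i \<in> {1, 2}" for i
  proof -
    have "PhiMap sA \<rho> (compH sH \<Delta> mult_H i n f) as = compE (PhiMap sA \<rho> mult_H) i n (PhiMap sA \<rho> f) as"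
      using that len by (intro Phi_multilin_compH[OF multilin_mult_H f]) auto
    also have "\<dots> = compE mult_A i n (PhiMap sA \<rho> f) as"
      unfolding compE_def using that len by (intro Phi_mult_length_2) auto
    finally show ?thesis .
  qed
  have inner: "PhiMap sA \<rho> (compH sH \<Delta> f i 2 mult_H) as = compE (PhiMap sA \<rho> f) i 2 mult_A as"
    if "i \<in> {1..n}" for i
  proof -
    have "PhiMap sA \<rho> (compH sH \<Delta> f i 2 mult_H) as = compE (PhiMap sA \<rho> f) i 2 (PhiMap sA \<rho> mult_H) as"
      using that len by (intro Phi_multilin_compH[OF f multilin_mult_H]) auto
    also have "\<dots> = compE (PhiMap sA \<rho> f) i 2 mult_A as"
      unfolding compE_def using that len by (subst Phi_mult_length_2) auto
    finally show ?thesis .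
  qed
  show ?thesis
    unfolding cobd_def Phi_add Phi_sum Phi_sgnv using outer inner by simp
qed

lemma Phi_cupp:
  assumes f: "multilin sH (*) m f" and g: "multilin sH (*) n g" and len: "length as = m + n"
  shows "PhiMap sA \<rho> (cupp (compH sH \<Delta>) mult_H f m g n) as = cupp compE mult_A (PhiMap sA \<rho> f) m (PhiMap sA \<rho> g) n as"
proof -
  define L where "L = take m as @ [PhiMap sA \<rho> g (take n (drop m as))] @ drop (m + n) as"
  have "length L = m + 1"
    unfolding L_def using len by simp
  have "PhiMap sA \<rho> (cupp (compH sH \<Delta>) mult_H f m g n) as
      = compE (PhiMap sA \<rho> (compH sH \<Delta> mult_H 1 m f)) (m + 1) n (PhiMap sA \<rho> g) as"
    unfolding cupp_def using len by (intro Phi_compH[OF slot_linear_compH_mult_H g]) auto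
  also have "\<dots> = PhiMap sA \<rho> (compH sH \<Delta> mult_H 1 m f) L"
    unfolding compE_def L_def by simp
  also have "\<dots> = compE (PhiMap sA \<rho> mult_H) 1 m (PhiMap sA \<rho> f) L"
    using \<open>length L = m + 1\<close> by (intro Phi_multilin_compH[OF multilin_mult_H f]) auto
  also have "\<dots> = compE mult_A 1 m (PhiMap sA \<rho> f) L"
    unfolding compE_def using \<open>length L = m + 1\<close> by (intro Phi_mult_length_2) simp
  also have "\<dots> = cupp compE mult_A (PhiMap sA \<rho> f) m (PhiMap sA \<rho> g) n as"
    unfolding cupp_def compE_def[of _ "m + 1"] L_def by simp
  finally show ?thesis .
qed

lemma Phi_gbracket:
  assumes f: "multilin sH (*) m f" and g: "multilin sH (*) n g" and len: "length as = m + n - 1"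
  shows "PhiMap sA \<rho> (gbracket (compH sH \<Delta>) f m g n) as = gbracket compE (PhiMap sA \<rho> f) m (PhiMap sA \<rho> g) n as"
proof -
  have "PhiMap sA \<rho> (compH sH \<Delta> f i n g) as = compE (PhiMap sA \<rho> f) i n (PhiMap sA \<rho> g) as"
    if "i \<in> {1..m}" for i
    using Phi_multilin_compH[OF f g] len that by simp
  moreover have "PhiMap sA \<rho> (compH sH \<Delta> g i m f) as = compE (PhiMap sA \<rho> g) i m (PhiMap sA \<rho> f) as"
    if "i \<in> {1..n}" for i
    using Phi_multilin_compH[OF g f] len that by (simp add: add.commute)
  ultimately show ?thesis
    unfolding gbracket_def circbar_def Phi_diff Phi_sum Phi_sgnv by simp
qed

end

theorem lemma7p2:
  fixes sH :: "'k::comm_ring_1 \<Rightarrow> 'h::ring_1 \<Rightarrow> 'h"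
    and sA :: "'k \<Rightarrow> 'a::ring_1 \<Rightarrow> 'a"
    and \<Delta> :: "'h \<Rightarrow> ('h \<times> 'h) list"
    and \<epsilon> :: "'h \<Rightarrow> 'k"
    and \<rho> :: "'a \<Rightarrow> ('a \<times> 'h) list"
  assumes "bialgebra sH \<Delta> \<epsilon>"
    and "comodule_algebra sA sH \<Delta> \<epsilon> \<rho>"
  shows
    \<comment> \<open>\<Phi> maps O^H(n) into End(A)(n), k-linearly\<close>
    "(\<forall>n f. multilin sH (*) n f \<longrightarrow> multilin sA sA n (PhiMap sA \<rho> f))
   \<and> (\<forall>f g c as. PhiMap sA \<rho> (\<lambda>hs. c * f hs + g hs) as = sA c (PhiMap sA \<rho> f as) + PhiMap sA \<rho> g as)
    \<comment> \<open>compatibility with partial compositions\<close>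
   \<and> (\<forall>m n i f g. multilin sH (*) m f \<and> multilin sH (*) n g \<and> 1 \<le> i \<and> i \<le> m \<longrightarrow>
        (\<forall>as. length as = m + n - 1 \<longrightarrow>
           PhiMap sA \<rho> (compH sH \<Delta> f i n g) as = compE (PhiMap sA \<rho> f) i n (PhiMap sA \<rho> g) as))
    \<comment> \<open>identity, multiplication and unit are preserved\<close>
   \<and> (\<forall>a. PhiMap sA \<rho> (\<lambda>hs. \<epsilon> (hs ! 0)) [a] = a)
   \<and> (\<forall>a b. PhiMap sA \<rho> (\<lambda>hs. \<epsilon> (hs ! 0 * hs ! 1)) [a, b] = a * b)
   \<and> PhiMap sA \<rho> (\<lambda>_. 1) [] = 1
    \<comment> \<open>consequences on cochains: chain map, cup product and bracket preserved\<close>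
   \<and> (\<forall>n f. multilin sH (*) n f \<longrightarrow> (\<forall>as. length as = n + 1 \<longrightarrow>
        PhiMap sA \<rho> (cobd (compH sH \<Delta>) (\<lambda>hs. \<epsilon> (hs ! 0 * hs ! 1)) n f) as
        = cobd compE (\<lambda>as. as ! 0 * as ! 1) n (PhiMap sA \<rho> f) as))
   \<and> (\<forall>m n f g. multilin sH (*) m f \<and> multilin sH (*) n g \<longrightarrow> (\<forall>as. length as = m + n \<longrightarrow>
        PhiMap sA \<rho> (cupp (compH sH \<Delta>) (\<lambda>hs. \<epsilon> (hs ! 0 * hs ! 1)) f m g n) as
        = cupp compE (\<lambda>as. as ! 0 * as ! 1) (PhiMap sA \<rho> f) m (PhiMap sA \<rho> g) n as))
   \<and> (\<forall>m n f g. multilin sH (*) m f \<and> multilin sH (*) n g \<longrightarrow> (\<forall>as. length as = m + n - 1 \<longrightarrow>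
        PhiMap sA \<rho> (gbracket (compH sH \<Delta>) f m g n) as
        = gbracket compE (PhiMap sA \<rho> f) m (PhiMap sA \<rho> g) n as))"
proof -
  interpret comodule_algebra_over_bialgebra sH sA \<Delta> \<epsilon> \<rho>
    using assms by unfold_locales
  show ?thesis
    by (intro conjI allI impI; (elim conjE)?;
        rule Phi_multilin Phi_linear Phi_multilin_compH Phi_counit Phi_mult Phi_unit
          Phi_cobd Phi_cupp Phi_gbracket; assumption)
qed

end
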